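(* Let $\mathbb{R}^{Nn\times Nn}_{s*}$ be the space of fourth-order tensors $\Xi=(\Xi_{\alpha i\beta j})$ ($\alpha,\beta\in\{1,\dots,N\}$, $i,j\in\{1,\dots,n\}$) satisfying $\Xi_{\alpha i\beta j}=\Xi_{\beta j\alpha i}=\Xi_{\beta i\alpha j}$. Then the relation $\Xi\le_\otimes\Theta$ is a partial ordering on $\mathbb{R}^{Nn\times Nn}_{s*}$ (reflexive, transitive and antisymmetric).
   Context: For fourth-order tensors, $\Xi\le_\otimes\Theta$ means $(\Theta-\Xi)_{\alpha i\beta j}\eta_\alpha w_i\eta_\beta w_j\ge0$ for all $\eta\in\mathbb{R}^N$ and $w\in\mathbb{R}^n$ (summation over repeated indices). *)

theory Defs
  imports Complex_Main
begin

text \<open>Fourth-order tensors Xi = (Xi_{alpha i beta j}) with alpha, beta ranging over a finite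
  index type 'N (representing {1..N}) and i, j over a finite index type 'n (representing {1..n}).\<close>
type_synonym ('N, 'n) tensor4 = "'N \<Rightarrow> 'n \<Rightarrow> 'N \<Rightarrow> 'n \<Rightarrow> real"

definition sym_star :: "('N::finite, 'n::finite) tensor4 set" where
  "sym_star = {Xi. \<forall>a i b j. Xi a i b j = Xi b j a i \<and> Xi a i b j = Xi b i a j}"

definition tensor_le :: "('N::finite, 'n::finite) tensor4 \<Rightarrow> ('N, 'n) tensor4 \<Rightarrow> bool" where
  "tensor_le Xi Theta \<longleftrightarrow>
     (\<forall>(eta :: 'N \<Rightarrow> real) (w :: 'n \<Rightarrow> real).
        (\<Sum>a\<in>UNIV. \<Sum>i\<in>UNIV. \<Sum>b\<in>UNIV. \<Sum>j\<in>UNIV.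
           (Theta a i b j - Xi a i b j) * eta a * w i * eta b * w j) \<ge> 0)"

end

theory Submission
  imports Defs "HOL-Library.Function_Algebras"
begin

text \<open>A tensor \<Xi> defines the quadrilinear form
  B(\<eta>, \<zeta>, w, v) = \<Sum> \<Xi>_{aibj} \<eta>_a w_i \<zeta>_b v_j, and \<Xi> \<le>_\<otimes> \<Theta> says that the diagonal
  B(\<eta>, \<eta>, w, w) of \<Xi> lies below that of \<Theta>. Reflexivity and transitivity are therefore
  inherited from the order on the reals. For antisymmetry, the symmetries of the tensors in
  \<open>sym_star\<close> make B symmetric in (\<eta>, \<zeta>) and in (w, v), so polarization in both pairs
  recovers B, and hence every entry of the tensor, from its diagonal.\<close>

definition biquad_form ::
    "('N::finite, 'n::finite) tensor4 \<Rightarrow> ('N \<Rightarrow> real) \<Rightarrow> ('N \<Rightarrow> real) \<Rightarrow> ('n \<Rightarrow> real) \<Rightarrow> ('n \<Rightarrow> real) \<Rightarrow> real"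
  where "biquad_form D \<eta> \<zeta> w v =
    (\<Sum>a\<in>UNIV. \<Sum>b\<in>UNIV. \<Sum>i\<in>UNIV. \<Sum>j\<in>UNIV. D a i b j * \<eta> a * \<zeta> b * w i * v j)"

lemma biquad_form_diff:
  "biquad_form (A - B) \<eta> \<zeta> w v = biquad_form A \<eta> \<zeta> w v - biquad_form B \<eta> \<zeta> w v"
  unfolding biquad_form_def by (simp add: sum_subtractf[symmetric] left_diff_distrib)

lemma biquad_form_add:
  "biquad_form D (\<eta> + \<eta>') \<zeta> w v = biquad_form D \<eta> \<zeta> w v + biquad_form D \<eta>' \<zeta> w v"
  "biquad_form D \<eta> (\<zeta> + \<zeta>') w v = biquad_form D \<eta> \<zeta> w v + biquad_form D \<eta> \<zeta>' w v"
  "biquad_form D \<eta> \<zeta> (w + w') v = biquad_form D \<eta> \<zeta> w v + biquad_form D \<eta> \<zeta> w' v"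
  "biquad_form D \<eta> \<zeta> w (v + v') = biquad_form D \<eta> \<zeta> w v + biquad_form D \<eta> \<zeta> w v'"
  unfolding biquad_form_def by (simp_all add: sum.distrib[symmetric] algebra_simps)

lemma biquad_form_unit_vectors:
  "biquad_form D (\<lambda>x. if x = a then 1 else 0) (\<lambda>x. if x = b then 1 else 0)
     (\<lambda>x. if x = i then 1 else 0) (\<lambda>x. if x = j then 1 else 0) = D a i b j"
  unfolding biquad_form_def
  by (simp add: mult.assoc[symmetric] if_distrib[of "\<lambda>x. _ * x"] sum.delta cong: if_cong)

lemma tensor_le_iff_biquad_form_le:
  "tensor_le Xi Theta \<longleftrightarrow> (\<forall>\<eta> w. biquad_form Xi \<eta> \<eta> w w \<le> biquad_form Theta \<eta> \<eta> w w)"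
proof -
  have "(\<Sum>a\<in>UNIV. \<Sum>i\<in>UNIV. \<Sum>b\<in>UNIV. \<Sum>j\<in>UNIV.
          (Theta a i b j - Xi a i b j) * \<eta> a * w i * \<eta> b * w j)
      = biquad_form (Theta - Xi) \<eta> \<eta> w w" for \<eta> w
    unfolding biquad_form_def
    by (rule sum.cong[OF refl], subst sum.swap) (simp add: mult_ac)
  then show ?thesis
    unfolding tensor_le_def biquad_form_diff by simp
qed

lemma sym_star_swaps:
  assumes "D \<in> sym_star"
  shows "D b j a i = D a i b j" and "D b i a j = D a i b j" and "D a j b i = D a i b j"
proof -
  have sym: "D a i b j = D b j a i" "D a i b j = D b i a j" for a i b j
    using assms unfolding sym_star_def by blast+
  show "D b j a i = D a i b j" "D b i a j = D a i b j"
    using sym[of a i b j] by simp_all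
  show "D a j b i = D a i b j"
    using sym(1)[of a i b j] sym(2)[of b j a i] by simp
qed

lemma sym_star_diff:
  assumes "A \<in> sym_star" and "B \<in> sym_star"
  shows "A - B \<in> sym_star"
  unfolding sym_star_def
  using sym_star_swaps(1,2)[OF assms(1)] sym_star_swaps(1,2)[OF assms(2)] by simp

lemma biquad_form_commute_N:
  assumes "D \<in> sym_star"
  shows "biquad_form D \<zeta> \<eta> w v = biquad_form D \<eta> \<zeta> w v"
  unfolding biquad_form_def
  by (subst sum.swap) (simp add: sym_star_swaps[OF assms] mult_ac)

lemma biquad_form_commute_n:
  assumes "D \<in> sym_star"
  shows "biquad_form D \<eta> \<zeta> v w = biquad_form D \<eta> \<zeta> w v"
proof -
  have "(\<Sum>i\<in>UNIV. \<Sum>j\<in>UNIV. D a i b j * \<eta> a * \<zeta> b * v i * w j)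
      = (\<Sum>i\<in>UNIV. \<Sum>j\<in>UNIV. D a i b j * \<eta> a * \<zeta> b * w i * v j)" for a b
    by (subst sum.swap) (simp add: sym_star_swaps[OF assms] mult_ac)
  then show ?thesis
    unfolding biquad_form_def by simp
qed

lemma sym_star_eq_0_if_biquad_form_diag_0:
  assumes D: "D \<in> sym_star" and diag: "\<And>\<eta> w. biquad_form D \<eta> \<eta> w w = 0"
  shows "D = 0"
proof -
  have polar_\<eta>: "biquad_form D \<eta> \<zeta> w w = 0" for \<eta> \<zeta> w
    using diag[of "\<eta> + \<zeta>" w] diag[of \<eta> w] diag[of \<zeta> w]
    by (simp add: biquad_form_add biquad_form_commute_N[OF D, of \<zeta> \<eta>])
  have polar: "biquad_form D \<eta> \<zeta> w v = 0" for \<eta> \<zeta> w v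
    using polar_\<eta>[of \<eta> \<zeta> "w + v"] polar_\<eta>[of \<eta> \<zeta> w] polar_\<eta>[of \<eta> \<zeta> v]
    by (simp add: biquad_form_add biquad_form_commute_n[OF D, of \<eta> \<zeta> v w])
  show ?thesis
    using polar biquad_form_unit_vectors[of D] by (intro ext) simp
qed

lemma tensor_le_refl: "tensor_le Xi Xi"
  by (simp add: tensor_le_iff_biquad_form_le)

lemma tensor_le_trans: "tensor_le Xi Psi \<Longrightarrow> tensor_le Psi Theta \<Longrightarrow> tensor_le Xi Theta"
  unfolding tensor_le_iff_biquad_form_le by (meson order_trans)

lemma tensor_le_antisym_on_sym_star:
  assumes "Xi \<in> sym_star" "Theta \<in> sym_star" "tensor_le Xi Theta" "tensor_le Theta Xi"
  shows "Xi = Theta"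
proof -
  have "biquad_form (Theta - Xi) \<eta> \<eta> w w = 0" for \<eta> w
    using assms(3,4) by (simp add: tensor_le_iff_biquad_form_le biquad_form_diff order_antisym)
  with sym_star_diff[OF assms(2,1)] have "Theta - Xi = 0"
    by (rule sym_star_eq_0_if_biquad_form_diag_0)
  then show ?thesis
    by simp
qed

theorem corollary3:
  "partial_order_on (sym_star :: ('N::finite, 'n::finite) tensor4 set)
     {(Xi, Theta). Xi \<in> sym_star \<and> Theta \<in> sym_star \<and> tensor_le Xi Theta}"
  unfolding partial_order_on_def preorder_on_def
  by (auto intro: refl_onI transI antisymI tensor_le_refl tensor_le_trans tensor_le_antisym_on_sym_star)

end
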